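(* Let $d\ge3$, $\Omega=\{1,\ldots,d\}$, and $F\le F'\le\mathrm{Sym}(\Omega)$ with $F'$ preserving the orbits of $F$, and suppose $F'$ acts 2-transitively on $\Omega$. Then $G(F,F')$ acts transitively on geodesic segments of any fixed finite length in $T$: for any two geodesic segments $[x_1,x_n]$ and $[x_1',x_n']$ in $T$ (with consecutive vertices $x_1,\ldots,x_n$ and $x_1',\ldots,x_n'$) there exists $g\in G(F,F')$ with $g(x_i)=x_i'$ for all $i$.
   Context: Let $T=\mathcal{T}_d$ be the $d$-regular tree with a fixed edge coloring $c\colon E(T)\to\Omega$ whose restriction $c_v$ to the edges $E(v)$ at each vertex $v$ is a bijection onto $\Omega$. For $g\in\mathrm{Aut}(T)$, $\sigma(g,v)=c_{gv}\circ g_v\circ c_v^{-1}$ with $g_v\colon E(v)\to E(gv)$ induced by $g$. $U(F')=\{g:\sigma(g,v)\in F'\ \forall v\}$, $G(F)=\{g:\sigma(g,v)\in F$ for all but finitely many $v\}$, $G(F,F')=G(F)\cap U(F')$. *)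

theory Defs
  imports "HOL-Combinatorics.Permutations"
begin

text \<open>Concrete model of the d-regular tree T_d with a legal edge colouring:
vertices are reduced words over Omega = {1..d} (no two consecutive letters equal);
w and w@[a] are adjacent and the edge between them has colour a.\<close>

definition Om :: "nat \<Rightarrow> nat set" where
  "Om d = {1..d}"

definition TV :: "nat \<Rightarrow> nat list set" where
  "TV d = {w. set w \<subseteq> Om d \<and> (\<forall>i. Suc i < length w \<longrightarrow> w ! i \<noteq> w ! Suc i)}"

definition adj :: "nat \<Rightarrow> nat list \<Rightarrow> nat list \<Rightarrow> bool" where
  "adj d v w \<longleftrightarrow> v \<in> TV d \<and> w \<in> TV d \<and> ((\<exists>a. w = v @ [a]) \<or> (\<exists>a. v = w @ [a]))"

text \<open>The neighbour of w along the edge of colour a (i.e. c_w^{-1}(a)).\<close>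
definition nbr :: "nat list \<Rightarrow> nat \<Rightarrow> nat list" where
  "nbr w a = (if w \<noteq> [] \<and> last w = a then butlast w else w @ [a])"

definition aut :: "nat \<Rightarrow> (nat list \<Rightarrow> nat list) \<Rightarrow> bool" where
  "aut d g \<longleftrightarrow> bij_betw g (TV d) (TV d) \<and>
     (\<forall>v\<in>TV d. \<forall>w\<in>TV d. adj d v w \<longleftrightarrow> adj d (g v) (g w))"

text \<open>Local action sigma(g,v) = c_{gv} o g_v o c_v^{-1}, as a permutation of {1..d}
(identity outside {1..d}).\<close>
definition sigma :: "nat \<Rightarrow> (nat list \<Rightarrow> nat list) \<Rightarrow> nat list \<Rightarrow> nat \<Rightarrow> nat" where
  "sigma d g v a = (if a \<in> Om d then (THE b. b \<in> Om d \<and> g (nbr v a) = nbr (g v) b) else a)"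

definition perm_group :: "nat \<Rightarrow> (nat \<Rightarrow> nat) set \<Rightarrow> bool" where
  "perm_group d F \<longleftrightarrow> F \<subseteq> {p. p permutes Om d} \<and> id \<in> F \<and>
     (\<forall>p\<in>F. \<forall>q\<in>F. p \<circ> q \<in> F) \<and> (\<forall>p\<in>F. inv p \<in> F)"

definition Uset :: "nat \<Rightarrow> (nat \<Rightarrow> nat) set \<Rightarrow> (nat list \<Rightarrow> nat list) set" where
  "Uset d F' = {g. aut d g \<and> (\<forall>v\<in>TV d. sigma d g v \<in> F')}"

definition Gset :: "nat \<Rightarrow> (nat \<Rightarrow> nat) set \<Rightarrow> (nat list \<Rightarrow> nat list) set" where
  "Gset d F = {g. aut d g \<and> finite {v \<in> TV d. sigma d g v \<notin> F}}"

definition GFF :: "nat \<Rightarrow> (nat \<Rightarrow> nat) set \<Rightarrow> (nat \<Rightarrow> nat) set \<Rightarrow> (nat list \<Rightarrow> nat list) set" where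
  "GFF d F F' = Gset d F \<inter> Uset d F'"

definition orbit_of :: "(nat \<Rightarrow> nat) set \<Rightarrow> nat \<Rightarrow> nat set" where
  "orbit_of F a = {f a | f. f \<in> F}"

definition preserves_orbits :: "nat \<Rightarrow> (nat \<Rightarrow> nat) set \<Rightarrow> (nat \<Rightarrow> nat) set \<Rightarrow> bool" where
  "preserves_orbits d F' F \<longleftrightarrow> (\<forall>p\<in>F'. \<forall>a\<in>Om d. p ` orbit_of F a = orbit_of F a)"

definition two_transitive :: "nat \<Rightarrow> (nat \<Rightarrow> nat) set \<Rightarrow> bool" where
  "two_transitive d F \<longleftrightarrow> (\<forall>a\<in>Om d. \<forall>b\<in>Om d. \<forall>a'\<in>Om d. \<forall>b'\<in>Om d.
      a \<noteq> b \<longrightarrow> a' \<noteq> b' \<longrightarrow> (\<exists>p\<in>F. p a = a' \<and> p b = b'))"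

definition walk :: "nat \<Rightarrow> nat list list \<Rightarrow> bool" where
  "walk d xs \<longleftrightarrow> xs \<noteq> [] \<and> set xs \<subseteq> TV d \<and>
     (\<forall>i. Suc i < length xs \<longrightarrow> adj d (xs ! i) (xs ! Suc i))"

definition tdist :: "nat \<Rightarrow> nat list \<Rightarrow> nat list \<Rightarrow> nat" where
  "tdist d v w = (LEAST n. \<exists>xs. walk d xs \<and> hd xs = v \<and> last xs = w \<and> length xs = Suc n)"

definition geodesic :: "nat \<Rightarrow> nat list list \<Rightarrow> bool" where
  "geodesic d xs \<longleftrightarrow> walk d xs \<and> tdist d (hd xs) (last xs) = length xs - 1"

end

theory Submission
  imports Defs
begin

text \<open>Colour-preserving automorphisms have trivial local actions, so conjugating by them
  preserves \<open>G(F,F')\<close>; the left multiplications of the free product of \<open>d\<close> copies of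
  \<open>\<int>/2\<close> are such automorphisms and act transitively on vertices. A geodesic segment is
  non-backtracking, so once its first vertex is moved to the root it consists of the prefixes
  of a reduced word. It therefore suffices to map the prefixes of a word \<open>w\<close> to those of a
  word \<open>w'\<close> of the same length by an element of \<open>G(F,F')\<close> fixing the root. Such an
  automorphism is built from prescribed local actions: along \<open>w\<close> they are elements of \<open>F'\<close>
  sending the two letters of \<open>w\<close> at a vertex to those of \<open>w'\<close> (two-transitivity); off the
  segment they are elements of \<open>F\<close> agreeing with the action at the parent on the connecting
  edge, which exist because \<open>F'\<close> preserves the \<open>F\<close>-orbits. Only the finitely many
  vertices of the segment then have local action outside \<open>F\<close>.\<close>

lemma TV_iff: "w \<in> TV d \<longleftrightarrow> set w \<subseteq> Om d \<and> distinct_adj w"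
  by (simp add: TV_def distinct_adj_conv_nth)

lemma TV_Nil [simp]: "[] \<in> TV d"
  by (simp add: TV_iff)

lemma TV_snoc: "w @ [a] \<in> TV d \<longleftrightarrow> w \<in> TV d \<and> a \<in> Om d \<and> (w \<noteq> [] \<longrightarrow> last w \<noteq> a)"
  by (auto simp: TV_iff distinct_adj_append_iff)

lemma TV_Cons: "a # w \<in> TV d \<longleftrightarrow> w \<in> TV d \<and> a \<in> Om d \<and> (w \<noteq> [] \<longrightarrow> hd w \<noteq> a)"
  by (auto simp: TV_iff distinct_adj_Cons)

lemma TV_take: "w \<in> TV d \<Longrightarrow> take k w \<in> TV d"
  by (metis TV_iff append_take_drop_id distinct_adj_appendD1 order_trans set_take_subset)

lemma TV_butlast: "w \<in> TV d \<Longrightarrow> butlast w \<in> TV d"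
  by (simp add: TV_take butlast_conv_take)

lemma TV_tl: "w \<in> TV d \<Longrightarrow> tl w \<in> TV d"
  by (cases w) (auto simp: TV_Cons)

lemma TV_nth_in_Om: "w \<in> TV d \<Longrightarrow> i < length w \<Longrightarrow> w ! i \<in> Om d"
  by (auto simp: TV_iff)

lemma nbr_inj: "nbr v a = nbr v b \<Longrightarrow> a = b"
  unfolding nbr_def by (auto split: if_splits dest: arg_cong[where f = length])

lemma nbr_in_TV: "v \<in> TV d \<Longrightarrow> a \<in> Om d \<Longrightarrow> nbr v a \<in> TV d"
  by (auto simp: nbr_def TV_snoc TV_butlast)

lemma adj_nbr: "v \<in> TV d \<Longrightarrow> a \<in> Om d \<Longrightarrow> adj d v (nbr v a)"
  using nbr_in_TV[of v d a] by (auto simp: adj_def nbr_def) (metis append_butlast_last_id)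

lemma adjE_nbr:
  assumes "adj d v w"
  obtains a where "a \<in> Om d" "w = nbr v a"
proof -
  from assms consider a where "w = v @ [a]" "w \<in> TV d" | a where "v = w @ [a]" "v \<in> TV d"
    by (auto simp: adj_def)
  then show thesis
    by cases (auto simp: TV_snoc nbr_def intro: that)
qed

lemma sigma_eqI: "a \<in> Om d \<Longrightarrow> b \<in> Om d \<Longrightarrow> g (nbr v a) = nbr (g v) b \<Longrightarrow> sigma d g v a = b"
  unfolding sigma_def by (auto intro!: the_equality dest: nbr_inj)

lemma aut_in_TV: "aut d g \<Longrightarrow> v \<in> TV d \<Longrightarrow> g v \<in> TV d"
  unfolding aut_def bij_betw_def by auto

lemma aut_inj_on: "aut d g \<Longrightarrow> inj_on g (TV d)"
  unfolding aut_def bij_betw_def by auto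

lemma aut_adj: "aut d g \<Longrightarrow> adj d v w \<Longrightarrow> adj d (g v) (g w)"
  unfolding aut_def by (metis adj_def)

lemma aut_comp: "aut d g \<Longrightarrow> aut d h \<Longrightarrow> aut d (g \<circ> h)"
  unfolding aut_def by (auto intro: bij_betw_trans dest: bij_betwE)

lemma autI:
  assumes bij: "bij_betw g (TV d) (TV d)"
    and local: "\<And>v. v \<in> TV d \<Longrightarrow> \<exists>p. p permutes Om d \<and> (\<forall>a\<in>Om d. g (nbr v a) = nbr (g v) (p a))"
  shows "aut d g"
proof -
  have "adj d v w \<longleftrightarrow> adj d (g v) (g w)" if v: "v \<in> TV d" and w: "w \<in> TV d" for v w
  proof -
    obtain p where p: "p permutes Om d" "\<And>a. a \<in> Om d \<Longrightarrow> g (nbr v a) = nbr (g v) (p a)"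
      using local[OF v] by blast
    have gv: "g v \<in> TV d" using bij v by (meson bij_betwE)
    show ?thesis
    proof
      assume "adj d v w"
      then obtain a where "a \<in> Om d" "w = nbr v a" by (rule adjE_nbr)
      then show "adj d (g v) (g w)"
        using p adj_nbr[OF gv] by (simp add: permutes_in_image)
    next
      assume "adj d (g v) (g w)"
      then obtain b where b: "b \<in> Om d" "g w = nbr (g v) b" by (rule adjE_nbr)
      define a where "a = inv p b"
      have a: "a \<in> Om d" "p a = b"
        using b(1) p(1) by (simp_all add: a_def permutes_inv permutes_in_image permutes_inverses)
      have "g (nbr v a) = g w" using p(2)[OF a(1)] a(2) b(2) by simp
      then have "nbr v a = w"
        using bij v w nbr_in_TV[OF v a(1)] by (auto simp: bij_betw_def dest: inj_onD)
      then show "adj d v w" using adj_nbr[OF v a(1)] by simp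
    qed
  qed
  with bij show ?thesis by (simp add: aut_def)
qed

lemma sigma_nbr:
  assumes "aut d g" "v \<in> TV d" "a \<in> Om d"
  shows "sigma d g v a \<in> Om d \<and> g (nbr v a) = nbr (g v) (sigma d g v a)"
proof -
  have "adj d (g v) (g (nbr v a))"
    using aut_adj[OF assms(1) adj_nbr[OF assms(2,3)]] .
  then obtain b where "b \<in> Om d" "g (nbr v a) = nbr (g v) b" by (rule adjE_nbr)
  with sigma_eqI[OF assms(3)] show ?thesis by simp
qed

section \<open>Colour-preserving automorphisms\<close>

definition colour_preserving :: "nat \<Rightarrow> (nat list \<Rightarrow> nat list) \<Rightarrow> bool" where
  "colour_preserving d g \<longleftrightarrow> aut d g \<and> (\<forall>v\<in>TV d. \<forall>a\<in>Om d. g (nbr v a) = nbr (g v) a)"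

lemma colour_preservingI:
  assumes "bij_betw g (TV d) (TV d)" "\<And>v a. v \<in> TV d \<Longrightarrow> a \<in> Om d \<Longrightarrow> g (nbr v a) = nbr (g v) a"
  shows "colour_preserving d g"
proof -
  have "aut d g"
    using assms by (intro autI[of g d]) (auto intro: exI[of _ id] permutes_id)
  with assms(2) show ?thesis by (simp add: colour_preserving_def)
qed

lemma colour_preserving_id: "colour_preserving d id"
  by (rule colour_preservingI) simp_all

lemma colour_preserving_comp:
  "colour_preserving d g \<Longrightarrow> colour_preserving d h \<Longrightarrow> colour_preserving d (g \<circ> h)"
  by (auto simp: colour_preserving_def aut_comp aut_in_TV)

lemma colour_preserving_inv_into:
  assumes "colour_preserving d g"
  shows "colour_preserving d (inv_into (TV d) g)"
proof -
  have g: "bij_betw g (TV d) (TV d)" using assms by (simp add: colour_preserving_def aut_def)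
  let ?h = "inv_into (TV d) g"
  have "?h (nbr v a) = nbr (?h v) a" if v: "v \<in> TV d" and a: "a \<in> Om d" for v a
  proof -
    have hv: "?h v \<in> TV d" "g (?h v) = v"
      using bij_betw_inv_into[OF g] bij_betw_inv_into_right[OF g] v by (auto dest: bij_betwE)
    then have "g (nbr (?h v) a) = nbr v a"
      using assms a by (simp add: colour_preserving_def)
    then show ?thesis
      using bij_betw_inv_into_left[OF g nbr_in_TV[OF hv(1) a]] by simp
  qed
  with bij_betw_inv_into[OF g] show ?thesis by (intro colour_preservingI)
qed

text \<open>Left multiplication by the generator \<open>a\<close>, viewing \<open>TV d\<close> as the free product of
  \<open>d\<close> copies of \<open>\<int>/2\<close>.\<close>
definition left_mult :: "nat \<Rightarrow> nat list \<Rightarrow> nat list" where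
  "left_mult a w = (if w \<noteq> [] \<and> hd w = a then tl w else a # w)"

lemma left_mult_in_TV: "a \<in> Om d \<Longrightarrow> w \<in> TV d \<Longrightarrow> left_mult a w \<in> TV d"
  by (auto simp: left_mult_def TV_Cons TV_tl)

lemma left_mult_left_mult: "w \<in> TV d \<Longrightarrow> left_mult a (left_mult a w) = w"
  by (cases w) (auto simp: left_mult_def TV_Cons)

lemma left_mult_nbr: "left_mult a (nbr v b) = nbr (left_mult a v) b"
  unfolding left_mult_def nbr_def
  by (cases v rule: rev_cases; cases "butlast v") (auto simp: hd_append butlast_append)

lemma colour_preserving_left_mult: "a \<in> Om d \<Longrightarrow> colour_preserving d (left_mult a)"
  by (intro colour_preservingI bij_betw_byWitness[where f' = "left_mult a"])
     (auto simp: left_mult_in_TV left_mult_left_mult left_mult_nbr)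

lemma colour_preserving_to_root:
  "u \<in> TV d \<Longrightarrow> \<exists>t. colour_preserving d t \<and> t u = []"
proof (induction u)
  case Nil
  then show ?case using colour_preserving_id by fastforce
next
  case (Cons a u)
  then obtain t where "colour_preserving d t" "t u = []" and a: "a \<in> Om d"
    by (auto simp: TV_Cons)
  then have "colour_preserving d (t \<circ> left_mult a) \<and> (t \<circ> left_mult a) (a # u) = []"
    using colour_preserving_comp colour_preserving_left_mult by (simp add: left_mult_def)
  then show ?case by blast
qed

lemma sigma_colour_preserving_conj:
  assumes "aut d g" "colour_preserving d s" "colour_preserving d t" "v \<in> TV d"
  shows "sigma d (s \<circ> g \<circ> t) v = sigma d g (t v)"
proof
  fix a
  show "sigma d (s \<circ> g \<circ> t) v a = sigma d g (t v) a"
  proof (cases "a \<in> Om d")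
    case True
    have tv: "t v \<in> TV d" using assms(3,4) by (simp add: colour_preserving_def aut_in_TV)
    have "(s \<circ> g \<circ> t) (nbr v a) = s (g (nbr (t v) a))"
      using assms(3,4) True by (simp add: colour_preserving_def)
    also have "\<dots> = nbr ((s \<circ> g \<circ> t) v) (sigma d g (t v) a)"
      using sigma_nbr[OF assms(1) tv True] assms(1,2) tv
      by (simp add: colour_preserving_def aut_in_TV)
    finally show ?thesis
      using sigma_eqI True sigma_nbr[OF assms(1) tv True] by blast
  qed (simp add: sigma_def)
qed

lemma GFF_colour_preserving_conj:
  assumes "g \<in> GFF d F F'" "colour_preserving d s" "colour_preserving d t"
  shows "s \<circ> g \<circ> t \<in> GFF d F F'"
proof -
  have g: "aut d g" and s: "aut d s" and t: "aut d t"
    using assms by (auto simp: GFF_def Gset_def colour_preserving_def)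
  have sig: "\<And>v. v \<in> TV d \<Longrightarrow> sigma d (s \<circ> g \<circ> t) v = sigma d g (t v)"
    using sigma_colour_preserving_conj[OF g assms(2,3)] .
  have "{v \<in> TV d. sigma d (s \<circ> g \<circ> t) v \<notin> F} = t -` {u \<in> TV d. sigma d g u \<notin> F} \<inter> TV d"
    using sig aut_in_TV[OF t] by auto
  moreover have "finite (t -` {u \<in> TV d. sigma d g u \<notin> F} \<inter> TV d)"
    using assms(1) aut_inj_on[OF t] by (intro finite_vimage_IntI) (simp_all add: GFF_def Gset_def)
  ultimately show ?thesis
    using assms(1) sig aut_comp[OF aut_comp[OF s g] t] aut_in_TV[OF t]
    by (simp add: GFF_def Gset_def Uset_def)
qed

section \<open>Geodesics are spelled by reduced words\<close>

lemma walk_iff: "walk d xs \<longleftrightarrow> xs \<noteq> [] \<and> set xs \<subseteq> TV d \<and> successively (adj d) xs"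
  by (simp add: walk_def successively_conv_nth)

lemma tdist_le_walk: "walk d xs \<Longrightarrow> tdist d (hd xs) (last xs) \<le> length xs - 1"
  unfolding tdist_def by (rule Least_le) (use walk_iff in auto)

lemma walk_shortcut: "walk d (as @ x # y # x # bs) \<Longrightarrow> walk d (as @ x # bs)"
  by (auto simp: walk_iff successively_append_iff successively_Cons)

lemma not_geodesic_backtrack: "\<not> geodesic d (as @ x # y # x # bs)"
proof
  let ?xs = "as @ x # y # x # bs" and ?ys = "as @ x # bs"
  assume geo: "geodesic d ?xs"
  have "hd ?ys = hd ?xs" "last ?ys = last ?xs"
    by (cases as; cases bs; simp)+
  then have "tdist d (hd ?xs) (last ?xs) \<le> length ?ys - 1"
    using geo tdist_le_walk[OF walk_shortcut] by (metis geodesic_def)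
  moreover have "tdist d (hd ?xs) (last ?xs) = length ?xs - 1"
    using geo by (simp only: geodesic_def)
  ultimately show False by simp
qed

definition nonbacktracking :: "nat \<Rightarrow> nat list list \<Rightarrow> bool" where
  "nonbacktracking d xs \<longleftrightarrow> walk d xs \<and> (\<forall>i. i + 2 < length xs \<longrightarrow> xs ! i \<noteq> xs ! (i + 2))"

lemma geodesic_nonbacktracking:
  assumes "geodesic d xs"
  shows "nonbacktracking d xs"
proof -
  have "xs ! i \<noteq> xs ! (i + 2)" if "i + 2 < length xs" for i
  proof
    assume eq: "xs ! i = xs ! (i + 2)"
    have decomp: "xs = take i xs @ xs ! i # xs ! (i + 1) # xs ! (i + 2) # drop (i + 3) xs"
      using that by (simp add: Cons_nth_drop_Suc numeral_3_eq_3)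
    have "geodesic d (take i xs @ xs ! i # xs ! (i + 1) # xs ! (i + 2) # drop (i + 3) xs)"
      using assms by (simp only: flip: decomp)
    then show False
      by (simp only: eq[symmetric] not_geodesic_backtrack)
  qed
  with assms show ?thesis by (simp add: nonbacktracking_def geodesic_def)
qed

lemma nonbacktracking_map:
  assumes g: "aut d g" and xs: "nonbacktracking d xs"
  shows "nonbacktracking d (map g xs)"
proof -
  have walk: "xs \<noteq> []" "set xs \<subseteq> TV d" "successively (adj d) xs"
    using xs by (simp_all add: nonbacktracking_def walk_iff)
  have "successively (adj d) (map g xs)"
    unfolding successively_map using walk(3)
    by (rule successively_mono) (rule aut_adj[OF g])
  moreover have "g (xs ! i) \<noteq> g (xs ! (i + 2))" if i: "i + 2 < length xs" for i
  proof
    have "xs ! i \<in> TV d" "xs ! (i + 2) \<in> TV d"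
      using i walk(2) by (meson add_lessD1 nth_mem subsetD)+
    moreover assume "g (xs ! i) = g (xs ! (i + 2))"
    ultimately have "xs ! i = xs ! (i + 2)"
      using aut_inj_on[OF g] by (meson inj_onD)
    with i xs show False by (simp add: nonbacktracking_def)
  qed
  moreover have "set (map g xs) \<subseteq> TV d"
    using walk(2) aut_in_TV[OF g] by auto
  ultimately show ?thesis
    using walk(1) by (simp add: nonbacktracking_def walk_iff)
qed

text \<open>A non-backtracking walk leaving the root must move away from it at every step, since
  the only neighbour of a vertex closer to the root is its parent.\<close>
lemma nonbacktracking_from_root:
  assumes nb: "nonbacktracking d zs" and root: "hd zs = []" and i: "i < length zs"
  shows "length (zs ! i) = i \<and> (\<forall>j\<le>i. zs ! j = take j (zs ! i))"
  using i
proof (induction i)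
  case 0
  then show ?case using root by (simp add: hd_conv_nth)
next
  case (Suc i)
  then have "i < length zs" by simp
  then have len: "length (zs ! i) = i" and pre: "\<And>j. j \<le> i \<Longrightarrow> zs ! j = take j (zs ! i)"
    using Suc.IH by blast+
  have "adj d (zs ! i) (zs ! Suc i)"
    using nb Suc.prems by (simp add: nonbacktracking_def walk_def)
  then consider a where "zs ! Suc i = zs ! i @ [a]" | a where "zs ! i = zs ! Suc i @ [a]"
    by (auto simp: adj_def)
  then show ?case
  proof cases
    case 1
    have "zs ! j = take j (zs ! Suc i)" if "j \<le> Suc i" for j
      using that pre[of j] len 1 by (cases "j = Suc i") simp_all
    moreover have "length (zs ! Suc i) = Suc i" using 1 len by simp
    ultimately show ?thesis by blast
  next
    case (2 a)
    then obtain k where k: "i = Suc k" using len by (cases i) auto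
    then have "zs ! k = zs ! (k + 2)" using 2 len pre[of k] by simp
    moreover have "k + 2 < length zs" using Suc.prems k by simp
    ultimately show ?thesis using nb by (simp add: nonbacktracking_def)
  qed
qed

lemma geodesic_translate_prefixes:
  assumes "geodesic d xs"
  obtains t w where "colour_preserving d t" "w \<in> TV d" "length xs = Suc (length w)"
    "\<And>i. i < length xs \<Longrightarrow> t (xs ! i) = take i w"
proof -
  have nb: "nonbacktracking d xs" using geodesic_nonbacktracking[OF assms] .
  then have ne: "xs \<noteq> []" and xs: "set xs \<subseteq> TV d"
    by (simp_all add: nonbacktracking_def walk_iff)
  then obtain t where t: "colour_preserving d t" "t (hd xs) = []"
    using colour_preserving_to_root by (meson hd_in_set subsetD)
  let ?zs = "map t xs" and ?n = "length xs - 1"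
  have "nonbacktracking d ?zs"
    using t(1) nb by (intro nonbacktracking_map) (simp add: colour_preserving_def)
  moreover have "hd ?zs = []" using ne t(2) by (simp add: hd_map)
  ultimately have w: "length (?zs ! ?n) = ?n" "\<forall>j\<le>?n. ?zs ! j = take j (?zs ! ?n)"
    using nonbacktracking_from_root[of d ?zs ?n] ne by simp_all
  have "?zs ! ?n \<in> TV d" using ne xs t(1) by (simp add: colour_preserving_def aut_in_TV subset_iff)
  moreover have "length xs = Suc (length (?zs ! ?n))" using w(1) ne by simp
  moreover have "t (xs ! i) = take i (?zs ! ?n)" if "i < length xs" for i
    using w(2)[rule_format, of i] that by simp
  ultimately show thesis by (rule that[OF t(1)])
qed

section \<open>Automorphisms with prescribed local actions\<close>

text \<open>Reading the letters of a word through the local actions at its prefixes: this is the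
  automorphism fixing the root whose local action at \<open>v\<close> is \<open>L v\<close>.\<close>
definition relabel :: "(nat list \<Rightarrow> nat \<Rightarrow> nat) \<Rightarrow> nat list \<Rightarrow> nat list" where
  "relabel L w = map (\<lambda>i. L (take i w) (w ! i)) [0..<length w]"

lemma relabel_Nil [simp]: "relabel L [] = []"
  by (simp add: relabel_def)

lemma length_relabel [simp]: "length (relabel L w) = length w"
  by (simp add: relabel_def)

lemma relabel_snoc [simp]: "relabel L (w @ [a]) = relabel L w @ [L w a]"
  by (simp add: relabel_def nth_append)

lemma relabel_eq_Nil_iff [simp]: "relabel L w = [] \<longleftrightarrow> w = []"
  by (simp add: relabel_def)

lemma nth_relabel: "i < length w \<Longrightarrow> relabel L w ! i = L (take i w) (w ! i)"
  by (simp add: relabel_def)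

lemma relabel_take: "relabel L (take k w) = take k (relabel L w)"
  by (rule nth_equalityI) (auto simp: nth_relabel)

text \<open>The edge between \<open>v\<close> and \<open>v @ [a]\<close> has colour \<open>a\<close> at both ends, so the local
  actions at its two endpoints must agree on \<open>a\<close>.\<close>
locale local_actions =
  fixes d :: nat and L :: "nat list \<Rightarrow> nat \<Rightarrow> nat"
  assumes permutes: "\<And>v. L v permutes Om d"
    and edge_compatible: "\<And>v a. v @ [a] \<in> TV d \<Longrightarrow> L (v @ [a]) a = L v a"
begin

lemma local_action_in_Om: "a \<in> Om d \<Longrightarrow> L v a \<in> Om d"
  by (simp add: permutes_in_image[OF permutes])

lemma local_action_inj: "L v a = L v b \<Longrightarrow> a = b"
  by (metis permutes_inj[OF permutes] injD)

lemma relabel_inj: "relabel L w = relabel L w' \<Longrightarrow> w = w'"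
proof (induction w arbitrary: w' rule: rev_induct)
  case Nil
  then show ?case by (metis length_0_conv length_relabel)
next
  case (snoc a w)
  then obtain w0 a' where w': "w' = w0 @ [a']"
    by (metis length_relabel length_append_singleton rev_exhaust Zero_not_Suc list.size(3))
  with snoc.prems have "relabel L w = relabel L w0" "L w a = L w0 a'" by auto
  with snoc.IH w' local_action_inj show ?case by blast
qed

lemma relabel_in_TV: "w \<in> TV d \<Longrightarrow> relabel L w \<in> TV d"
proof (induction w rule: rev_induct)
  case (snoc a w)
  then have w: "w \<in> TV d" and a: "a \<in> Om d" and ne: "w \<noteq> [] \<Longrightarrow> last w \<noteq> a"
    by (auto simp: TV_snoc)
  have "last (relabel L w) \<noteq> L w a" if "w \<noteq> []"
  proof -
    obtain w0 b where "w = w0 @ [b]" using \<open>w \<noteq> []\<close> by (metis rev_exhaust)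
    with ne[OF that] w edge_compatible[of w0 b] show ?thesis by (auto dest: local_action_inj)
  qed
  with snoc.IH w a local_action_in_Om show ?case by (simp add: TV_snoc)
qed simp

lemma relabel_surj: "u \<in> TV d \<Longrightarrow> \<exists>w\<in>TV d. relabel L w = u"
proof (induction u rule: rev_induct)
  case (snoc b u)
  then have u: "u \<in> TV d" and b: "b \<in> Om d" and ne: "u \<noteq> [] \<Longrightarrow> last u \<noteq> b"
    by (auto simp: TV_snoc)
  obtain w where w: "w \<in> TV d" "relabel L w = u" using snoc.IH u by blast
  define a where "a = inv (L w) b"
  have a: "a \<in> Om d" "L w a = b"
    using b permutes[of w] by (simp_all add: a_def permutes_inv permutes_in_image permutes_inverses)
  have "last w \<noteq> a" if "w \<noteq> []"
  proof
    assume "last w = a"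
    obtain w0 where "w = w0 @ [a]" using \<open>w \<noteq> []\<close> \<open>last w = a\<close> by (metis append_butlast_last_id)
    with w a ne edge_compatible[of w0 a] show False by auto
  qed
  with w a have "w @ [a] \<in> TV d" "relabel L (w @ [a]) = u @ [b]" by (auto simp: TV_snoc)
  then show ?case by blast
qed (auto intro: bexI[of _ "[]"])

lemma relabel_nbr:
  assumes v: "v \<in> TV d" and a: "a \<in> Om d"
  shows "relabel L (nbr v a) = nbr (relabel L v) (L v a)"
proof (cases "v \<noteq> [] \<and> last v = a")
  case True
  then obtain v0 where "v = v0 @ [a]" by (metis append_butlast_last_id)
  with v edge_compatible[of v0 a] show ?thesis by (simp add: nbr_def)
next
  case False
  have "last (relabel L v) \<noteq> L v a" if "v \<noteq> []"
  proof
    obtain v0 b where vb: "v = v0 @ [b]" using \<open>v \<noteq> []\<close> by (metis rev_exhaust)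
    assume "last (relabel L v) = L v a"
    with vb v edge_compatible[of v0 b] have "b = a" by (auto dest: local_action_inj)
    with False vb show False by simp
  qed
  then have "nbr (relabel L v) (L v a) = relabel L v @ [L v a]"
    by (auto simp: nbr_def)
  moreover have "nbr v a = v @ [a]"
    using False by (auto simp: nbr_def)
  ultimately show ?thesis by simp
qed

lemma aut_relabel: "aut d (relabel L)"
proof (rule autI)
  show "bij_betw (relabel L) (TV d) (TV d)"
    unfolding bij_betw_def inj_on_def using relabel_in_TV relabel_surj relabel_inj by auto
  show "\<exists>p. p permutes Om d \<and> (\<forall>a\<in>Om d. relabel L (nbr v a) = nbr (relabel L v) (p a))"
    if "v \<in> TV d" for v
    using permutes relabel_nbr[OF that] by blast
qed

lemma sigma_relabel:
  assumes "v \<in> TV d"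
  shows "sigma d (relabel L) v = L v"
proof
  fix a
  show "sigma d (relabel L) v a = L v a"
  proof (cases "a \<in> Om d")
    case True
    then show ?thesis using sigma_eqI local_action_in_Om relabel_nbr[OF assms] by blast
  qed (simp add: sigma_def permutes_not_in[OF permutes])
qed

end

section \<open>Moving one segment from the root onto another\<close>

definition choose_in :: "('a \<Rightarrow> 'a) set \<Rightarrow> (('a \<Rightarrow> 'a) \<Rightarrow> bool) \<Rightarrow> 'a \<Rightarrow> 'a" where
  "choose_in F P = (if \<exists>p\<in>F. P p then SOME p. p \<in> F \<and> P p else id)"

lemma choose_in_mem: "id \<in> F \<Longrightarrow> choose_in F P \<in> F"
  unfolding choose_in_def by (metis (mono_tags, lifting) someI_ex)

lemma choose_in_prop: "\<exists>p\<in>F. P p \<Longrightarrow> P (choose_in F P)"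
  unfolding choose_in_def by (metis (mono_tags, lifting) someI_ex)

lemma two_transitive_imp_transitive:
  assumes "perm_group d F" "two_transitive d F" "a \<in> Om d" "a' \<in> Om d"
  shows "\<exists>p\<in>F. p a = a'"
proof (cases "2 \<le> d")
  case True
  define other :: "nat \<Rightarrow> nat" where "other x = (if x = 1 then 2 else 1)" for x
  have "other a \<in> Om d" "other a' \<in> Om d" "a \<noteq> other a" "a' \<noteq> other a'"
    using True by (auto simp: Om_def other_def)
  with assms(2-4) show ?thesis unfolding two_transitive_def by blast
next
  case False
  then have "a = a'" using assms(3,4) by (auto simp: Om_def)
  with assms(1) show ?thesis unfolding perm_group_def by (metis id_apply)
qed

lemma preserves_orbits_in_orbit:
  assumes "perm_group d F" "preserves_orbits d F' F" "p \<in> F'" "a \<in> Om d"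
  shows "\<exists>f\<in>F. f a = p a"
proof -
  have "id \<in> F" using assms(1) by (simp add: perm_group_def)
  then have "a \<in> orbit_of F a" unfolding orbit_of_def by (metis (mono_tags) id_apply mem_Collect_eq)
  then have "p a \<in> p ` orbit_of F a" by blast
  also have "p ` orbit_of F a = orbit_of F a"
    using assms(2-4) unfolding preserves_orbits_def by blast
  finally obtain f where "f \<in> F" "p a = f a" unfolding orbit_of_def by blast
  then show ?thesis by metis
qed

fun segment_labelling_rev ::
  "(nat \<Rightarrow> nat) set \<Rightarrow> (nat \<Rightarrow> nat) set \<Rightarrow> nat list \<Rightarrow> nat list \<Rightarrow> nat list \<Rightarrow> nat \<Rightarrow> nat"
where
  "segment_labelling_rev F F' w w' [] = choose_in F' (\<lambda>p. p (w ! 0) = w' ! 0)"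
| "segment_labelling_rev F F' w w' (a # r) =
     (if Suc (length r) < length w \<and> rev r @ [a] = take (Suc (length r)) w
      then choose_in F' (\<lambda>p. p a = w' ! length r \<and> p (w ! Suc (length r)) = w' ! Suc (length r))
      else choose_in F (\<lambda>f. f a = segment_labelling_rev F F' w w' r a))"

definition segment_labelling ::
  "(nat \<Rightarrow> nat) set \<Rightarrow> (nat \<Rightarrow> nat) set \<Rightarrow> nat list \<Rightarrow> nat list \<Rightarrow> nat list \<Rightarrow> nat \<Rightarrow> nat"
where
  "segment_labelling F F' w w' v = segment_labelling_rev F F' w w' (rev v)"

lemma segment_labelling_Nil:
  "segment_labelling F F' w w' [] = choose_in F' (\<lambda>p. p (w ! 0) = w' ! 0)"
  by (simp add: segment_labelling_def)

lemma segment_labelling_snoc: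
  "segment_labelling F F' w w' (v @ [a]) =
     (if Suc (length v) < length w \<and> v @ [a] = take (Suc (length v)) w
      then choose_in F' (\<lambda>p. p a = w' ! length v \<and> p (w ! Suc (length v)) = w' ! Suc (length v))
      else choose_in F (\<lambda>f. f a = segment_labelling F F' w w' v a))"
  by (simp add: segment_labelling_def)

locale segment_pair =
  fixes d :: nat and F F' :: "(nat \<Rightarrow> nat) set" and w w' :: "nat list"
  assumes F: "perm_group d F" and F': "perm_group d F'" and F_sub: "F \<subseteq> F'"
    and orbits: "preserves_orbits d F' F" and two_trans: "two_transitive d F'"
    and w: "w \<in> TV d" and w': "w' \<in> TV d" and same_length: "length w = length w'"
begin

abbreviation L :: "nat list \<Rightarrow> nat \<Rightarrow> nat" where
  "L \<equiv> segment_labelling F F' w w'"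

lemma id_in_F: "id \<in> F" and id_in_F': "id \<in> F'"
  using F F' by (simp_all add: perm_group_def)

lemma labelling_in_F': "L v \<in> F'"
proof (induction v rule: rev_induct)
  case Nil
  show ?case by (simp add: segment_labelling_Nil choose_in_mem id_in_F')
next
  case (snoc a v)
  show ?case
    using choose_in_mem[OF id_in_F] choose_in_mem[OF id_in_F'] F_sub
    by (auto simp: segment_labelling_snoc)
qed

lemma labelling_permutes: "L v permutes Om d"
  using labelling_in_F' F' by (auto simp: perm_group_def)

lemma exists_two_letters:
  assumes "Suc j < length w"
  shows "\<exists>p\<in>F'. p (w ! j) = w' ! j \<and> p (w ! Suc j) = w' ! Suc j"
proof -
  have "w ! j \<noteq> w ! Suc j" "w' ! j \<noteq> w' ! Suc j"
    using assms w w' same_length by (auto simp: TV_iff dest: distinct_adj_nth)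
  moreover have "w ! j \<in> Om d" "w ! Suc j \<in> Om d" "w' ! j \<in> Om d" "w' ! Suc j \<in> Om d"
    using assms w w' same_length by (auto intro: TV_nth_in_Om)
  ultimately show ?thesis
    using two_trans by (simp add: two_transitive_def)
qed

lemma labelling_on_segment:
  assumes "Suc j < length w"
  shows "L (take (Suc j) w) (w ! j) = w' ! j \<and> L (take (Suc j) w) (w ! Suc j) = w' ! Suc j"
proof -
  have "L (take (Suc j) w) = choose_in F' (\<lambda>p. p (w ! j) = w' ! j \<and> p (w ! Suc j) = w' ! Suc j)"
    using assms segment_labelling_snoc[of F F' w w' "take j w" "w ! j"]
    by (simp add: take_Suc_conv_app_nth)
  then show ?thesis using choose_in_prop[OF exists_two_letters[OF assms]] by simp
qed

lemma labelling_along_segment: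
  assumes "k < length w"
  shows "L (take k w) (w ! k) = w' ! k"
proof (cases k)
  case 0
  have "\<exists>p\<in>F'. p (w ! 0) = w' ! 0"
    using assms same_length w w' F' two_trans
    by (intro two_transitive_imp_transitive) (auto intro: TV_nth_in_Om)
  with 0 show ?thesis
    using choose_in_prop[of F' "\<lambda>p. p (w ! 0) = w' ! 0"] by (simp add: segment_labelling_Nil)
next
  case (Suc j)
  with assms labelling_on_segment[of j] show ?thesis by simp
qed

lemma labelling_edge_compatible:
  assumes va: "v @ [a] \<in> TV d"
  shows "L (v @ [a]) a = L v a"
proof (cases "Suc (length v) < length w \<and> v @ [a] = take (Suc (length v)) w")
  case True
  then have "v @ [a] = take (length v) w @ [w ! length v]"
    by (simp add: take_Suc_conv_app_nth)
  then have "v = take (length v) w" "a = w ! length v"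
    by simp_all
  with True labelling_on_segment[of "length v"] labelling_along_segment[of "length v"]
  show ?thesis by simp
next
  case False
  have "a \<in> Om d" using va by (simp add: TV_snoc)
  then have "\<exists>f\<in>F. f a = L v a"
    using preserves_orbits_in_orbit[OF F orbits labelling_in_F'] by blast
  moreover have "L (v @ [a]) = choose_in F (\<lambda>f. f a = L v a)"
    unfolding segment_labelling_snoc using False by (rule if_not_P)
  ultimately show ?thesis
    using choose_in_prop[of F "\<lambda>f. f a = L v a"] by simp
qed

lemma finite_labelling_not_in_F: "finite {v. L v \<notin> F}"
proof (rule finite_subset)
  show "{v. L v \<notin> F} \<subseteq> (\<lambda>k. take k w) ` {..length w}"
  proof
    fix v assume "v \<in> {v. L v \<notin> F}"
    then have notF: "L v \<notin> F" by simp
    show "v \<in> (\<lambda>k. take k w) ` {..length w}"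
    proof (cases v rule: rev_cases)
      case Nil
      then show ?thesis by (auto intro: image_eqI[of _ _ 0])
    next
      case (snoc v0 a)
      show ?thesis
      proof (cases "Suc (length v0) < length w \<and> v0 @ [a] = take (Suc (length v0)) w")
        case True
        with snoc show ?thesis by (auto intro: image_eqI[of _ _ "Suc (length v0)"])
      next
        case False
        then have "L v = choose_in F (\<lambda>f. f a = L v0 a)"
          unfolding snoc segment_labelling_snoc by (rule if_not_P)
        with notF choose_in_mem[OF id_in_F] show ?thesis by simp
      qed
    qed
  qed
qed simp

sublocale local_actions d L
  using labelling_permutes labelling_edge_compatible by unfold_locales

lemma relabel_in_GFF: "relabel L \<in> GFF d F F'"
proof -
  have "{v \<in> TV d. sigma d (relabel L) v \<notin> F} \<subseteq> {v. L v \<notin> F}"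
    using sigma_relabel by auto
  then have "finite {v \<in> TV d. sigma d (relabel L) v \<notin> F}"
    using finite_labelling_not_in_F by (rule finite_subset)
  with aut_relabel sigma_relabel labelling_in_F' show ?thesis
    by (simp add: GFF_def Gset_def Uset_def)
qed

lemma relabel_segment: "relabel L (take k w) = take k w'"
proof -
  have "relabel L w = w'"
    by (rule nth_equalityI) (simp_all add: same_length nth_relabel labelling_along_segment)
  then show ?thesis by (simp add: relabel_take)
qed

end

theorem mainTheorem7:
  fixes d :: nat and F F' :: "(nat \<Rightarrow> nat) set"
  assumes "d \<ge> 3"
    and "perm_group d F" and "perm_group d F'" and "F \<subseteq> F'"
    and "preserves_orbits d F' F"
    and "two_transitive d F'"
    and "geodesic d xs" and "geodesic d ys" and "length xs = length ys"
  shows "\<exists>g\<in>GFF d F F'. \<forall>i<length xs. g (xs ! i) = ys ! i"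
proof -
  obtain s w where s: "colour_preserving d s" "w \<in> TV d" "length xs = Suc (length w)"
    and xs: "\<And>i. i < length xs \<Longrightarrow> s (xs ! i) = take i w"
    using geodesic_translate_prefixes[OF assms(7)] by blast
  obtain t w' where t: "colour_preserving d t" "w' \<in> TV d" "length ys = Suc (length w')"
    and ys: "\<And>i. i < length ys \<Longrightarrow> t (ys ! i) = take i w'"
    using geodesic_translate_prefixes[OF assms(8)] by blast
  interpret segment_pair d F F' w w'
    using assms s t by unfold_locales simp_all
  define g where "g = inv_into (TV d) t \<circ> relabel L \<circ> s"
  have "g \<in> GFF d F F'"
    unfolding g_def using relabel_in_GFF colour_preserving_inv_into[OF t(1)] s(1)
    by (rule GFF_colour_preserving_conj)
  moreover have "g (xs ! i) = ys ! i" if "i < length xs" for i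
  proof -
    have "ys ! i \<in> TV d"
      using assms(8,9) that by (auto simp: geodesic_def walk_iff)
    moreover have "g (xs ! i) = inv_into (TV d) t (t (ys ! i))"
      using that assms(9) xs ys by (simp add: g_def relabel_segment)
    ultimately show ?thesis
      using t(1) by (simp add: colour_preserving_def aut_inj_on)
  qed
  ultimately show ?thesis by blast
qed

end
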